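(* Let $R_0^*\in SO(3)$ with unit quaternion representation $w_0^*$, and let $(y_i,x_i)$ satisfy $y_i=R_0^*x_i+\epsilon_i$ with $\epsilon_i\in\mathbb{R}^3$. Then for every $R_0\in SO(3)$ with unit quaternion representation $w_0$, $\|y_i-R_0x_i\|_2^2=w_0^\top Q_iw_0$, and $Q_i=P_i+E_i+\|\epsilon_i\|_2^2I_4$ for symmetric $4\times4$ matrices $P_i,E_i$ with the following properties: (a) $P_i$ is positive semidefinite with eigenvalues $4\|x_i\|_2^2,4\|x_i\|_2^2,0,0$ (with multiplicity), and $P_iw_0^*=0$; in particular $Q_iw_0^*=P_iw_0^*=0$ in the noiseless case $\epsilon_i=0$; (b) $E_i$ has eigenvalues $2\epsilon_i^\top R_0^*x_i+2\|\epsilon_i\|_2\|x_i\|_2$ and $2\epsilon_i^\top R_0^*x_i-2\|\epsilon_i\|_2\|x_i\|_2$, each of multiplicity $2$; for every $R_0\in SO(3)$ with unit quaternion representation $w_0$ we have $w_0^\top E_iw_0=2\epsilon_i^\top(R_0^*x_i-R_0x_i)$, and in particular $(w_0^* )^\top E_iw_0^*=0$.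
   Context: For $w=[w_1;w_2;w_3;w_4]\in\mathbb{S}^3$, $R(w)=\begin{bmatrix} w_1^2+w_2^2-w_3^2-w_4^2 & 2(w_2w_3-w_1w_4) & 2(w_2w_4+w_1w_3)\\ 2(w_2w_3+w_1w_4) & w_1^2+w_3^2-w_2^2-w_4^2 & 2(w_3w_4-w_1w_2)\\ 2(w_2w_4-w_1w_3) & 2(w_3w_4+w_1w_2) & w_1^2+w_4^2-w_2^2-w_3^2\end{bmatrix}\in SO(3)$; every rotation equals $R(w)$ for exactly two $w=\pm w$, its unit quaternion representations. $Q_i$ is the unique symmetric $4\times4$ matrix with $w^\top Q_iw=\|y_i-R(w)x_i\|_2^2$ for all $w\in\mathbb{S}^3$. *)

theory Defs
  imports "HOL-Analysis.Analysis" "HOL-Library.Multiset"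
begin

definition quat_rot :: "real^4 \<Rightarrow> real^3^3" where
  "quat_rot w = (let w1 = w$1; w2 = w$2; w3 = w$3; w4 = w$4 in
     vector [
       vector [w1^2+w2^2-w3^2-w4^2, 2*(w2*w3-w1*w4), 2*(w2*w4+w1*w3)],
       vector [2*(w2*w3+w1*w4), w1^2+w3^2-w2^2-w4^2, 2*(w3*w4-w1*w2)],
       vector [2*(w2*w4-w1*w3), 2*(w3*w4+w1*w2), w1^2+w4^2-w2^2-w3^2]])"

definition SO3 :: "(real^3^3) set" where
  "SO3 = {R. orthogonal_matrix R \<and> det R = 1}"

definition symmetric_mat :: "real^'n^'n \<Rightarrow> bool" where
  "symmetric_mat A \<longleftrightarrow> transpose A = A"

definition psd_mat :: "real^'n^'n \<Rightarrow> bool" where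
  "psd_mat A \<longleftrightarrow> (\<forall>v. 0 \<le> v \<bullet> (A *v v))"

text \<open>The eigenvalues of A, counted with (algebraic) multiplicity, are the multiset M:
  the characteristic polynomial det(tI - A) equals the product of (t - lambda) over M.\<close>
definition eigenvalues_mset :: "real^'n^'n \<Rightarrow> real multiset \<Rightarrow> bool" where
  "eigenvalues_mset A M \<longleftrightarrow> size M = CARD('n) \<and>
     (\<forall>t. det (mat t - A) = prod_mset (image_mset (\<lambda>l. t - l) M))"

definition Qmat :: "real^3 \<Rightarrow> real^3 \<Rightarrow> real^4^4" where
  "Qmat y x = (THE Q. symmetric_mat Q \<and>
     (\<forall>w::real^4. norm w = 1 \<longrightarrow> w \<bullet> (Q *v w) = (norm (y - quat_rot w *v x))^2))"

end

theory Submission imports Defs begin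

text \<open>For fixed a and x, w \<mapsto> a \<bullet> R(w) x is a quadratic form on R^4 whose symmetric matrix
  B(a, x) is linear in a. Hence ||y - R(w) x||^2 = (||y||^2 + ||x||^2) ||w||^2 - 2 w' B(y, x) w on the
  unit sphere, and splitting y = R0* x + eps splits Q into matrices c I - 2 B(a, x) of the same shape.
  Each of them has characteristic polynomial ((t - c)^2 - 4 ||a||^2 ||x||^2)^2, which gives both
  spectra; it is positive semidefinite once c \<ge> 2 ||a|| ||x||, by Cauchy-Schwarz and
  ||R(w) x|| = ||w||^2 ||x||; and B(R(w) x, x) w = ||w||^2 ||x||^2 w makes w0* a kernel vector.\<close>

lemma vector_4 [simp]:
  "(vector [a, b, c, d] :: 'a::zero^4) $ 1 = a"
  "(vector [a, b, c, d] :: 'a::zero^4) $ 2 = b"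
  "(vector [a, b, c, d] :: 'a::zero^4) $ 3 = c"
  "(vector [a, b, c, d] :: 'a::zero^4) $ 4 = d"
  unfolding vector_def by simp_all

lemma sign_swap_comp:
  "permutation q \<Longrightarrow> sign (Transposition.transpose a b \<circ> q) = (if a = b then sign q else - sign q)"
  by (simp add: sign_compose permutation_swap_id sign_swap_id)

lemma det_4:
  "det (A::'a::comm_ring_1^4^4) =
    A$1$1*A$2$2*A$3$3*A$4$4 - A$1$1*A$2$2*A$3$4*A$4$3 - A$1$1*A$2$3*A$3$2*A$4$4
  + A$1$1*A$2$3*A$3$4*A$4$2 + A$1$1*A$2$4*A$3$2*A$4$3 - A$1$1*A$2$4*A$3$3*A$4$2
  - A$1$2*A$2$1*A$3$3*A$4$4 + A$1$2*A$2$1*A$3$4*A$4$3 + A$1$2*A$2$3*A$3$1*A$4$4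
  - A$1$2*A$2$3*A$3$4*A$4$1 - A$1$2*A$2$4*A$3$1*A$4$3 + A$1$2*A$2$4*A$3$3*A$4$1
  + A$1$3*A$2$1*A$3$2*A$4$4 - A$1$3*A$2$1*A$3$4*A$4$2 - A$1$3*A$2$2*A$3$1*A$4$4
  + A$1$3*A$2$2*A$3$4*A$4$1 + A$1$3*A$2$4*A$3$1*A$4$2 - A$1$3*A$2$4*A$3$2*A$4$1
  - A$1$4*A$2$1*A$3$2*A$4$3 + A$1$4*A$2$1*A$3$3*A$4$2 + A$1$4*A$2$2*A$3$1*A$4$3
  - A$1$4*A$2$2*A$3$3*A$4$1 - A$1$4*A$2$3*A$3$1*A$4$2 + A$1$4*A$2$3*A$3$2*A$4$1"
proof -
  have f1: "finite {2::4, 3, 4}" "1 \<notin> {2::4, 3, 4}"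
    and f2: "finite {3::4, 4}" "2 \<notin> {3::4, 4}"
    and f3: "finite {4::4}" "3 \<notin> {4::4}"
    by auto
  show ?thesis
    unfolding det_def UNIV_4 sum_over_permutations_insert[OF f1] sum_over_permutations_insert[OF f2]
      sum_over_permutations_insert[OF f3] permutes_sing
    by (simp add: sign_swap_comp permutation_compose sign_swap_id permutation_swap_id sign_id
        swap_id_eq algebra_simps)
qed

lemma symmetric_mat_diff:
  fixes A B :: "real^'n^'n"
  assumes "symmetric_mat A" and "symmetric_mat B"
  shows "symmetric_mat (A - B)"
  using assms by (simp add: symmetric_mat_def transpose_def vec_eq_iff)

lemma quadratic_form_eq_0_if_unit:
  fixes D :: "real^'n^'n"
  assumes "\<And>u. norm u = 1 \<Longrightarrow> u \<bullet> (D *v u) = 0"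
  shows "v \<bullet> (D *v v) = 0"
proof (cases "v = 0")
  case False
  define u where "u = (1 / norm v) *\<^sub>R v"
  have "norm u = 1" and v_eq: "v = norm v *\<^sub>R u"
    using False by (simp_all add: u_def)
  have "v \<bullet> (D *v v) = (norm v)^2 * (u \<bullet> (D *v u))"
    by (subst (1 2) v_eq) (simp add: matrix_vector_mult_scaleR power2_eq_square)
  then show ?thesis
    using assms \<open>norm u = 1\<close> by simp
qed simp

lemma symmetric_mat_eq_0_if_quadratic_form_0:
  fixes D :: "real^'n^'n"
  assumes "symmetric_mat D" and "\<And>u. norm u = 1 \<Longrightarrow> u \<bullet> (D *v u) = 0"
  shows "D = 0"
proof -
  have form_0: "v \<bullet> (D *v v) = 0" for v
    using assms(2) by (rule quadratic_form_eq_0_if_unit)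
  have bilinear_sym: "v \<bullet> (D *v u) = u \<bullet> (D *v v)" for u v
  proof -
    have "v \<bullet> (D *v u) = (u v* transpose D) \<bullet> v"
      by (simp add: inner_commute)
    also have "\<dots> = u \<bullet> (transpose D *v v)"
      by (rule dot_lmul_matrix)
    finally show ?thesis
      using assms(1) unfolding symmetric_mat_def by (simp only:)
  qed
  have bilinear_0: "u \<bullet> (D *v v) = 0" for u v
  proof -
    have "0 = (u + v) \<bullet> (D *v (u + v))"
      by (rule form_0[symmetric])
    also have "\<dots> = 2 * (u \<bullet> (D *v v))"
      using form_0 bilinear_sym[of v u]
      by (simp add: matrix_vector_right_distrib inner_add_left inner_add_right)
    finally show ?thesis by simp
  qed
  show ?thesis
    using bilinear_0[of "D *v v" v for v] by (simp add: matrix_eq)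
qed

lemma symmetric_mat_eq_if_unit_quadratic_forms_eq:
  fixes A B :: "real^'n^'n"
  assumes "symmetric_mat A" and "symmetric_mat B"
    and "\<And>u. norm u = 1 \<Longrightarrow> u \<bullet> (A *v u) = u \<bullet> (B *v u)"
  shows "A = B"
proof -
  have "A - B = 0"
    using assms by (intro symmetric_mat_eq_0_if_quadratic_form_0 symmetric_mat_diff)
      (simp_all add: matrix_vector_mult_diff_rdistrib inner_diff_right)
  then show ?thesis by simp
qed

lemma norm_quat_rot_mult: "norm (quat_rot w *v x) = (norm w)^2 * norm x"
proof -
  have "(norm (quat_rot w *v x))^2 = ((norm w)^2 * norm x)^2"
    unfolding power2_norm_eq_inner power_mult_distrib
    by (simp add: inner_vec_def sum_3 sum_4 matrix_vector_mult_def quat_rot_def Let_def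
        algebra_simps power2_eq_square)
  then show ?thesis
    by (simp add: power2_eq_iff_nonneg)
qed

definition quat_form_mat :: "real^3 \<Rightarrow> real^3 \<Rightarrow> real^4^4" where
  "quat_form_mat a x = (let a1 = a$1; a2 = a$2; a3 = a$3; x1 = x$1; x2 = x$2; x3 = x$3 in
    vector [
     vector [a1*x1+a2*x2+a3*x3, a3*x2-a2*x3, a1*x3-a3*x1, a2*x1-a1*x2],
     vector [a3*x2-a2*x3, a1*x1-a2*x2-a3*x3, a1*x2+a2*x1, a1*x3+a3*x1],
     vector [a1*x3-a3*x1, a1*x2+a2*x1, -a1*x1+a2*x2-a3*x3, a2*x3+a3*x2],
     vector [a2*x1-a1*x2, a1*x3+a3*x1, a2*x3+a3*x2, -a1*x1-a2*x2+a3*x3]])"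

lemma inner_quat_form_mat: "w \<bullet> (quat_form_mat a x *v w) = a \<bullet> (quat_rot w *v x)"
  by (simp add: inner_vec_def sum_3 sum_4 matrix_vector_mult_def quat_form_mat_def quat_rot_def
      Let_def algebra_simps power2_eq_square)

lemma transpose_quat_form_mat: "transpose (quat_form_mat a x) = quat_form_mat a x"
  by (simp add: vec_eq_iff forall_4 transpose_def quat_form_mat_def Let_def)

lemma quat_form_mat_add: "quat_form_mat (a + b) x = quat_form_mat a x + quat_form_mat b x"
  by (simp add: vec_eq_iff forall_4 quat_form_mat_def Let_def algebra_simps)

lemma quat_form_mat_zero [simp]: "quat_form_mat 0 x = 0"
  by (simp add: vec_eq_iff forall_4 quat_form_mat_def)

lemma quat_form_mat_rot_mult:
  "quat_form_mat (quat_rot w *v x) x *v w = ((norm w)^2 * (norm x)^2) *\<^sub>R w"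
  unfolding power2_norm_eq_inner
  by (simp add: vec_eq_iff forall_4 inner_vec_def sum_3 sum_4 matrix_vector_mult_def
      quat_form_mat_def quat_rot_def Let_def algebra_simps power2_eq_square)

definition quat_cost_mat :: "real \<Rightarrow> real^3 \<Rightarrow> real^3 \<Rightarrow> real^4^4" where
  "quat_cost_mat c a x = c *\<^sub>R mat 1 - 2 *\<^sub>R quat_form_mat a x"

lemma symmetric_quat_cost_mat: "symmetric_mat (quat_cost_mat c a x)"
  using transpose_quat_form_mat[of a x]
  by (simp add: symmetric_mat_def quat_cost_mat_def transpose_def vec_eq_iff mat_def)

lemma inner_quat_cost_mat:
  "w \<bullet> (quat_cost_mat c a x *v w) = c * (w \<bullet> w) - 2 * (a \<bullet> (quat_rot w *v x))"
  by (simp add: quat_cost_mat_def matrix_vector_mult_diff_rdistrib inner_diff_right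
      inner_quat_form_mat flip: scaleR_matrix_vector_assoc)

lemma inner_quat_cost_mat_unit:
  assumes "norm w = 1"
  shows "w \<bullet> (quat_cost_mat c a x *v w) = c - 2 * (a \<bullet> (quat_rot w *v x))"
  using assms by (simp add: inner_quat_cost_mat dot_square_norm)

lemma quat_cost_mat_add:
  "quat_cost_mat c a x + quat_cost_mat d b x = quat_cost_mat (c + d) (a + b) x"
  by (simp add: quat_cost_mat_def quat_form_mat_add algebra_simps)

lemma quat_cost_mat_add_scalar:
  "quat_cost_mat c a x + d *\<^sub>R mat 1 = quat_cost_mat (c + d) a x"
  by (simp add: quat_cost_mat_def algebra_simps)

lemma det_quat_cost_mat:
  "det (mat t - quat_cost_mat c a x) = ((t - c)^2 - 4 * (norm a)^2 * (norm x)^2)^2"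
  unfolding det_4 power2_norm_eq_inner
  by (simp add: quat_cost_mat_def mat_def quat_form_mat_def Let_def inner_vec_def sum_3)
    (simp add: algebra_simps power2_eq_square)

lemma eigenvalues_quat_cost_mat:
  "eigenvalues_mset (quat_cost_mat c a x)
     {# c + 2 * norm a * norm x, c + 2 * norm a * norm x,
        c - 2 * norm a * norm x, c - 2 * norm a * norm x #}"
  unfolding eigenvalues_mset_def det_quat_cost_mat
  by (simp add: algebra_simps power2_eq_square)

lemma psd_quat_cost_mat:
  assumes "2 * norm a * norm x \<le> c"
  shows "psd_mat (quat_cost_mat c a x)"
  unfolding psd_mat_def
proof
  fix w :: "real^4"
  have "2 * (a \<bullet> (quat_rot w *v x)) \<le> 2 * norm a * norm x * (norm w)^2"
    using norm_cauchy_schwarz[of a "quat_rot w *v x"] by (simp add: norm_quat_rot_mult mult_ac)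
  also have "\<dots> \<le> c * (w \<bullet> w)"
    using assms by (simp add: mult_right_mono flip: power2_norm_eq_inner)
  finally show "0 \<le> w \<bullet> (quat_cost_mat c a x *v w)"
    by (simp add: inner_quat_cost_mat)
qed

lemma psd_quat_cost_mat_norm_eq:
  assumes "norm a = norm x"
  shows "psd_mat (quat_cost_mat (2 * (norm x)^2) a x)"
  using assms by (intro psd_quat_cost_mat) (simp add: power2_eq_square)

lemma eigenvalues_quat_cost_mat_norm_eq:
  assumes "norm a = norm x"
  shows "eigenvalues_mset (quat_cost_mat (2 * (norm x)^2) a x)
    {# 4 * (norm x)^2, 4 * (norm x)^2, 0, 0 #}"
  using eigenvalues_quat_cost_mat[of "2 * (norm x)^2" a x] assms
  by (simp add: power2_eq_square)

lemma quat_cost_mat_rot_mult: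
  assumes "norm w = 1"
  shows "quat_cost_mat (2 * (norm x)^2) (quat_rot w *v x) x *v w = 0"
  using assms
  by (simp add: quat_cost_mat_def quat_form_mat_rot_mult matrix_vector_mult_diff_rdistrib
      flip: scaleR_matrix_vector_assoc)

lemma norm_diff_quat_rot:
  assumes "norm w = 1"
  shows "(norm (y - quat_rot w *v x))^2 = w \<bullet> (quat_cost_mat ((norm y)^2 + (norm x)^2) y x *v w)"
proof -
  have "w \<bullet> w = 1" and "(quat_rot w *v x) \<bullet> (quat_rot w *v x) = x \<bullet> x"
    using assms norm_quat_rot_mult[of w x] by (simp_all add: dot_square_norm)
  then show ?thesis
    by (simp add: inner_quat_cost_mat power2_norm_eq_inner inner_diff_left inner_diff_right
        inner_commute)
qed

lemma quat_cost_mat_split: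
  assumes "norm a = norm x"
  shows "quat_cost_mat ((norm (a + e))^2 + (norm x)^2) (a + e) x =
    quat_cost_mat (2 * (norm x)^2) a x + quat_cost_mat (2 * (e \<bullet> a)) e x + (norm e)^2 *\<^sub>R mat 1"
proof -
  have "a \<bullet> a = x \<bullet> x"
    using assms by (metis dot_square_norm)
  then have "(norm (a + e))^2 + (norm x)^2 = 2 * (norm x)^2 + 2 * (e \<bullet> a) + (norm e)^2"
    by (simp add: power2_norm_eq_inner inner_add_left inner_add_right inner_commute)
  then show ?thesis
    by (simp add: quat_cost_mat_add quat_cost_mat_add_scalar add.assoc)
qed

lemma Qmat_eq_quat_cost_mat: "Qmat y x = quat_cost_mat ((norm y)^2 + (norm x)^2) y x"
  unfolding Qmat_def
proof (rule the_equality)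
  fix Q :: "real^4^4"
  assume "symmetric_mat Q \<and>
    (\<forall>w. norm w = 1 \<longrightarrow> w \<bullet> (Q *v w) = (norm (y - quat_rot w *v x))^2)"
  then show "Q = quat_cost_mat ((norm y)^2 + (norm x)^2) y x"
    by (intro symmetric_mat_eq_if_unit_quadratic_forms_eq symmetric_quat_cost_mat)
      (simp_all add: norm_diff_quat_rot)
qed (simp add: symmetric_quat_cost_mat norm_diff_quat_rot)

theorem lemma3p5:
  fixes R0s :: "real^3^3" and w0s :: "real^4" and x y eps :: "real^3"
  assumes "R0s \<in> SO3" and "norm w0s = 1" and "quat_rot w0s = R0s"
    and "y = R0s *v x + eps"
  shows "(\<forall>R0 w0. R0 \<in> SO3 \<longrightarrow> norm w0 = 1 \<longrightarrow> quat_rot w0 = R0 \<longrightarrow>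
            (norm (y - R0 *v x))^2 = w0 \<bullet> (Qmat y x *v w0))
    \<and> (\<exists>P E :: real^4^4.
          symmetric_mat P \<and> symmetric_mat E \<and>
          Qmat y x = P + E + (norm eps)^2 *\<^sub>R mat 1 \<and>
          psd_mat P \<and>
          eigenvalues_mset P {# 4 * (norm x)^2, 4 * (norm x)^2, 0, 0 #} \<and>
          P *v w0s = 0 \<and>
          (eps = 0 \<longrightarrow> Qmat y x *v w0s = 0 \<and> P *v w0s = 0) \<and>
          eigenvalues_mset E
            {# 2 * (eps \<bullet> (R0s *v x)) + 2 * norm eps * norm x,
               2 * (eps \<bullet> (R0s *v x)) + 2 * norm eps * norm x,
               2 * (eps \<bullet> (R0s *v x)) - 2 * norm eps * norm x,
               2 * (eps \<bullet> (R0s *v x)) - 2 * norm eps * norm x #} \<and>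
          (\<forall>R0 w0. R0 \<in> SO3 \<longrightarrow> norm w0 = 1 \<longrightarrow> quat_rot w0 = R0 \<longrightarrow>
             w0 \<bullet> (E *v w0) = 2 * (eps \<bullet> (R0s *v x - R0 *v x))) \<and>
          w0s \<bullet> (E *v w0s) = 0)"
proof -
  define P where "P = quat_cost_mat (2 * (norm x)^2) (R0s *v x) x"
  define E where "E = quat_cost_mat (2 * (eps \<bullet> (R0s *v x))) eps x"
  have norm_R0s_x: "norm (R0s *v x) = norm x"
    using norm_quat_rot_mult[of w0s x] assms(2,3) by simp
  have Q_split: "Qmat y x = P + E + (norm eps)^2 *\<^sub>R mat 1"
    using quat_cost_mat_split[OF norm_R0s_x, of eps]
    by (simp add: Qmat_eq_quat_cost_mat assms(4) P_def E_def)
  have P_w0s: "P *v w0s = 0"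
    using quat_cost_mat_rot_mult[OF assms(2)] by (simp add: P_def assms(3))
  have E_form: "\<forall>R0 w0. R0 \<in> SO3 \<longrightarrow> norm w0 = 1 \<longrightarrow> quat_rot w0 = R0 \<longrightarrow>
      w0 \<bullet> (E *v w0) = 2 * (eps \<bullet> (R0s *v x - R0 *v x))"
    by (clarify, simp add: E_def inner_quat_cost_mat_unit inner_diff_right)
  have "\<forall>R0 w0. R0 \<in> SO3 \<longrightarrow> norm w0 = 1 \<longrightarrow> quat_rot w0 = R0 \<longrightarrow>
      (norm (y - R0 *v x))^2 = w0 \<bullet> (Qmat y x *v w0)"
    by (clarify, simp add: norm_diff_quat_rot Qmat_eq_quat_cost_mat)
  moreover have "eps = 0 \<longrightarrow> Qmat y x *v w0s = 0 \<and> P *v w0s = 0"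
    using Q_split P_w0s by (simp add: E_def quat_cost_mat_def)
  moreover have "w0s \<bullet> (E *v w0s) = 0"
    using E_form assms(1-3) by simp
  moreover note psd_quat_cost_mat_norm_eq[OF norm_R0s_x, folded P_def]
    eigenvalues_quat_cost_mat_norm_eq[OF norm_R0s_x, folded P_def]
    eigenvalues_quat_cost_mat[of "2 * (eps \<bullet> (R0s *v x))" eps x, folded E_def]
  moreover have "symmetric_mat P" and "symmetric_mat E"
    by (simp_all add: P_def E_def symmetric_quat_cost_mat)
  ultimately show ?thesis
    using Q_split P_w0s E_form by blast
qed

end
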